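(* Let $(X,d)$ be a metric space, $\mu$ a non-atomic Borel measure on $X$, $f:X\to\mathbb R$ a function and $\gamma:[0,h]\to X$ a path in $\Gamma^\mu$ parametrized by $\mu$-arc length. If there is a nonnegative Borel measurable $\rho:X\to\mathbb R$ such that $|f(\gamma(s))-f(\gamma(t))|\le\int_{\gamma|_{[s,t]}}\rho<\infty$ for every $0\le s<t\le h$, then $f\circ\gamma:[0,h]\to\mathbb R$ is absolutely continuous.
   Context: A path is a continuous map $\gamma:[a,b]\to X$; a subpath is a restriction to a subinterval, trivial if that interval is a point; $\mathrm{Im}(\gamma)=\gamma([a,b])$. $\mu$ non-atomic: $\mu(\{x\})=0$ for all $x$. $\Gamma^\mu$ is the set of all non-trivial injective paths $\gamma$ with $0<\mu(\mathrm{Im}(\tilde\gamma))<\infty$ for every non-trivial subpath $\tilde\gamma$. For Borel $g\ge0$, $\int_\gamma g:=\int_{\mathrm{Im}(\gamma)}g\,d\mu$. A path $\gamma:[0,h]\to X$ in $\Gamma^\mu$ is parametrized by $\mu$-arc length if $\mu(\gamma([0,t]))=t$ for all $t\in[0,h]$. *)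

theory Defs
  imports "HOL-Analysis.Analysis"
begin

definition abs_continuous_on :: "real \<Rightarrow> real \<Rightarrow> (real \<Rightarrow> real) \<Rightarrow> bool" where
  "abs_continuous_on a b g \<longleftrightarrow>
     (\<forall>\<epsilon>>0. \<exists>\<delta>>0. \<forall>(n::nat) (l::nat \<Rightarrow> real) (r::nat \<Rightarrow> real).
        (\<forall>i<n. a \<le> l i \<and> l i \<le> r i \<and> r i \<le> b) \<longrightarrow>
        (\<forall>i<n. \<forall>j<n. i \<noteq> j \<longrightarrow> {l i<..<r i} \<inter> {l j<..<r j} = {}) \<longrightarrow>
        (\<Sum>i<n. r i - l i) < \<delta> \<longrightarrow>
        (\<Sum>i<n. \<bar>g (r i) - g (l i)\<bar>) < \<epsilon>)"

definition in_Gamma_mu :: "'a::metric_space measure \<Rightarrow> (real \<Rightarrow> 'a) \<Rightarrow> real \<Rightarrow> real \<Rightarrow> bool" where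
  "in_Gamma_mu M \<gamma> a b \<longleftrightarrow>
     a < b \<and> continuous_on {a..b} \<gamma> \<and> inj_on \<gamma> {a..b} \<and>
     (\<forall>s t. a \<le> s \<and> s < t \<and> t \<le> b \<longrightarrow>
        0 < emeasure M (\<gamma> ` {s..t}) \<and> emeasure M (\<gamma> ` {s..t}) < \<infinity>)"

definition mu_arc_length_param :: "'a::metric_space measure \<Rightarrow> (real \<Rightarrow> 'a) \<Rightarrow> real \<Rightarrow> bool" where
  "mu_arc_length_param M \<gamma> h \<longleftrightarrow>
     (\<forall>t\<in>{0..h}. emeasure M (\<gamma> ` {0..t}) = ennreal t)"

end

theory Submission
  imports Defs
begin

text \<open>Along an injective path parametrized by \<open>\<mu>\<close>-arc length, the open images \<open>\<gamma>((l,r))\<close> of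
  disjoint subintervals are disjoint sets of \<open>\<mu>\<close>-measure at most \<open>r - l\<close>, and by
  non-atomicity the increment of \<open>f \<circ> \<gamma>\<close> on \<open>[l,r]\<close> is bounded by the integral of \<open>\<rho>\<close>
  over \<open>\<gamma>((l,r))\<close>.
  Summing over finitely many intervals of total length \<open>< \<delta>\<close> therefore bounds the total
  variation by the integral of \<open>\<rho>\<close> over a set of measure \<open>< \<delta>\<close>, which is small by the
  absolute continuity of the integral of the integrable function \<open>\<rho>\<close> on \<open>\<gamma>([0,h])\<close>.\<close>

lemma nn_integral_above_level_small:
  fixes g :: "'a \<Rightarrow> ennreal"
  assumes [measurable]: "g \<in> borel_measurable M" and fin: "integral\<^sup>N M g < \<infinity>" and "0 < e"
  obtains i :: nat where "(\<integral>\<^sup>+ x. g x - of_nat i \<partial>M) < ennreal e"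
proof -
  define g_above where "g_above i x = g x - of_nat i" for i :: nat and x
  have [measurable]: "g_above i \<in> borel_measurable M" for i
    unfolding g_above_def by measurable
  have "decseq g_above"
    by (intro decseq_SucI le_funI) (simp add: g_above_def ennreal_minus_mono)
  moreover have "integral\<^sup>N M (g_above i) < \<infinity>" for i
    using fin by (rule le_less_trans[rotated]) (auto intro!: nn_integral_mono simp: g_above_def)
  ultimately have "(INF i. integral\<^sup>N M (g_above i)) = (\<integral>\<^sup>+ x. (INF i. g_above i x) \<partial>M)"
    by (simp add: nn_integral_monotone_convergence_INF_decseq)
  also have "\<dots> = 0"
  proof (rule nn_integral_0_iff_AE[THEN iffD2])
    have "AE x in M. g x \<noteq> \<infinity>"
      using fin by (intro nn_integral_PInf_AE) auto
    then show "AE x in M. (INF i. g_above i x) = 0"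
    proof eventually_elim
      fix x assume "g x \<noteq> \<infinity>"
      then obtain r where r: "g x = ennreal r" by (cases "g x") auto
      obtain n :: nat where "r \<le> n" using real_arch_simple by blast
      hence "g_above n x = 0" by (simp add: g_above_def r diff_eq_0_ennreal)
      thus "(INF i. g_above i x) = 0" by (metis INF_lower UNIV_I le_zero_eq)
    qed
  qed simp
  finally have "(INF i. integral\<^sup>N M (g_above i)) < ennreal e" using \<open>0 < e\<close> by simp
  then obtain i where "integral\<^sup>N M (g_above i) < ennreal e"
    by (auto simp: INF_less_iff)
  with that show ?thesis
    unfolding g_above_def by blast
qed

lemma nn_integral_absolutely_continuous:
  fixes g :: "'a \<Rightarrow> ennreal"
  assumes [measurable]: "g \<in> borel_measurable M" and fin: "integral\<^sup>N M g < \<infinity>" and "0 < e"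
  obtains d where "0 < d"
    and "\<And>A. A \<in> sets M \<Longrightarrow> emeasure M A < ennreal d \<Longrightarrow> (\<integral>\<^sup>+ x\<in>A. g x \<partial>M) < ennreal e"
proof -
  obtain i :: nat where i: "(\<integral>\<^sup>+ x. g x - of_nat i \<partial>M) < ennreal (e/2)"
    using nn_integral_above_level_small[OF _ fin, of "e/2"] \<open>0 < e\<close> by auto
  define d where "d = e / (2 * (real i + 1))"
  have "0 < d" using \<open>0 < e\<close> by (simp add: d_def)
  have small_part: "of_nat i * ennreal d \<le> ennreal (e/2)"
  proof -
    have "i * d \<le> e/2" using \<open>0 < e\<close> unfolding d_def by (simp add: field_simps)
    moreover have "of_nat i * ennreal d = ennreal (i * d)"
      using \<open>0 < d\<close> by (simp add: ennreal_of_nat_eq_real_of_nat ennreal_mult)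
    ultimately show ?thesis by (simp add: ennreal_leI)
  qed
  have "(\<integral>\<^sup>+ x\<in>A. g x \<partial>M) < ennreal e"
    if [measurable]: "A \<in> sets M" and small_A: "emeasure M A < ennreal d" for A
  proof -
    \<comment> \<open>Split \<open>g\<close> at level \<open>i\<close>: the part above has small integral, the part below is at most \<open>i\<close>.\<close>
    have "(\<integral>\<^sup>+ x\<in>A. g x \<partial>M) \<le> (\<integral>\<^sup>+ x. (g x - of_nat i) * indicator A x + of_nat i * indicator A x \<partial>M)"
      by (intro nn_integral_mono) (auto simp: indicator_def diff_add_self_ennreal nle_le)
    also have "\<dots> = (\<integral>\<^sup>+ x. (g x - of_nat i) * indicator A x \<partial>M) + of_nat i * emeasure M A"
      by (subst nn_integral_add) (auto simp: nn_integral_cmult)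
    also have "\<dots> \<le> (\<integral>\<^sup>+ x. g x - of_nat i \<partial>M) + of_nat i * ennreal d"
      using small_A by (intro add_mono nn_integral_mono mult_left_mono) (auto simp: indicator_def)
    also have "\<dots> \<le> (\<integral>\<^sup>+ x. g x - of_nat i \<partial>M) + ennreal (e/2)"
      using small_part by (rule add_left_mono)
    also have "\<dots> = ennreal (e/2) + (\<integral>\<^sup>+ x. g x - of_nat i \<partial>M)"
      by (rule add.commute)
    also have "\<dots> < ennreal (e/2) + ennreal (e/2)"
      using i by (simp add: ennreal_add_left_cancel_less)
    also have "\<dots> = ennreal e"
      using \<open>0 < e\<close> by (simp flip: ennreal_plus)
    finally show ?thesis .
  qed
  with \<open>0 < d\<close> that show ?thesis by blast
qed

lemma emeasure_density_absolutely_continuous: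
  assumes [measurable]: "g \<in> borel_measurable M" "S \<in> sets M"
    and fin: "emeasure (density M g) S < \<infinity>" and "0 < e"
  shows "\<exists>d>0. \<forall>A\<in>sets M. A \<subseteq> S \<longrightarrow> emeasure M A < ennreal d \<longrightarrow>
           emeasure (density M g) A < ennreal e"
proof -
  have "(\<integral>\<^sup>+ x. g x * indicator S x \<partial>M) < \<infinity>"
    using fin by (simp add: emeasure_density)
  then obtain d where "0 < d" and small:
    "\<And>A. A \<in> sets M \<Longrightarrow> emeasure M A < ennreal d \<Longrightarrow>
       (\<integral>\<^sup>+ x\<in>A. g x * indicator S x \<partial>M) < ennreal e"
    using nn_integral_absolutely_continuous[of "\<lambda>x. g x * indicator S x" M e] \<open>0 < e\<close> by auto
  have "emeasure (density M g) A < ennreal e"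
    if "A \<in> sets M" "A \<subseteq> S" "emeasure M A < ennreal d" for A
  proof -
    have "emeasure (density M g) A = (\<integral>\<^sup>+ x\<in>A. g x * indicator S x \<partial>M)"
      using that by (auto simp: emeasure_density indicator_def intro!: nn_integral_cong)
    with small that show ?thesis by simp
  qed
  with \<open>0 < d\<close> show ?thesis by blast
qed

lemma sets_image_atLeastAtMost:
  fixes \<gamma> :: "real \<Rightarrow> 'a::metric_space"
  assumes "sets M = sets borel" and "continuous_on {l..r} \<gamma>"
  shows "\<gamma> ` {l..r} \<in> sets M"
  using assms compact_continuous_image[OF assms(2)] by (simp add: compact_imp_closed)

lemma inj_on_image_greaterThanLessThan:
  fixes l r :: "'a::linorder"
  assumes "inj_on \<gamma> {l..r}"
  shows "\<gamma> ` {l<..<r} = \<gamma> ` {l..r} - {\<gamma> l, \<gamma> r}"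
proof -
  have "{l<..<r} = {l..r} - {l, r}" by auto
  moreover have "{l, r} \<subseteq> {l..r}" if "l \<le> r" using that by auto
  ultimately show ?thesis
    using inj_on_image_set_diff[OF assms] by (cases "l \<le> r") auto
qed

lemma sets_image_greaterThanLessThan:
  fixes \<gamma> :: "real \<Rightarrow> 'a::metric_space"
  assumes "sets M = sets borel" and "continuous_on {l..r} \<gamma>" and "inj_on \<gamma> {l..r}"
  shows "\<gamma> ` {l<..<r} \<in> sets M"
  using sets_image_atLeastAtMost[OF assms(1,2)] assms(1)
  by (simp add: inj_on_image_greaterThanLessThan[OF assms(3)] sets.Diff)

lemma sets_image_greaterThanLessThan_subinterval:
  fixes \<gamma> :: "real \<Rightarrow> 'a::metric_space"
  assumes "sets M = sets borel" and "continuous_on {a..b} \<gamma>" and "inj_on \<gamma> {a..b}"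
    and "a \<le> l" "r \<le> b"
  shows "\<gamma> ` {l<..<r} \<in> sets M"
proof -
  have "{l..r} \<subseteq> {a..b}"
    using assms by auto
  then show ?thesis
    by (intro sets_image_greaterThanLessThan[OF assms(1)] continuous_on_subset[OF assms(2)]
        inj_on_subset[OF assms(3)])
qed

lemma emeasure_image_atLeastAtMost_nonatomic:
  fixes \<gamma> :: "real \<Rightarrow> 'a::metric_space"
  assumes "sets M = sets borel" and nonatomic: "\<And>x. emeasure M {x} = 0"
    and "continuous_on {l..r} \<gamma>" and "inj_on \<gamma> {l..r}" and "l \<le> r"
  shows "emeasure M (\<gamma> ` {l..r}) = emeasure M (\<gamma> ` {l<..<r})"
proof -
  have "\<gamma> ` {l..r} = \<gamma> ` {l<..<r} \<union> ({\<gamma> l} \<union> {\<gamma> r})"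
    using inj_on_image_greaterThanLessThan[OF assms(4)] \<open>l \<le> r\<close> by auto
  moreover have "{x} \<in> null_sets M" for x
    using nonatomic assms(1) by (simp add: null_sets_def)
  moreover have "\<gamma> ` {l<..<r} \<union> {\<gamma> l} \<in> sets M"
    using sets_image_greaterThanLessThan[OF assms(1,3,4)] assms(1) by simp
  ultimately show ?thesis
    using sets_image_greaterThanLessThan[OF assms(1,3,4)]
    by (simp only: Un_assoc[symmetric] emeasure_Un_null_set)
qed

lemma emeasure_image_greaterThanLessThan_le_arc_length:
  fixes \<gamma> :: "real \<Rightarrow> 'a::metric_space"
  assumes borel: "sets M = sets borel" and arclen: "mu_arc_length_param M \<gamma> h"
    and cont: "continuous_on {0..h} \<gamma>" and inj: "inj_on \<gamma> {0..h}"
    and "0 \<le> l" "l \<le> r" "r \<le> h"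
  shows "emeasure M (\<gamma> ` {l<..<r}) \<le> ennreal (r - l)"
proof -
  have cont_on: "continuous_on {s..t} \<gamma>" and inj_on: "inj_on \<gamma> {s..t}"
    if "0 \<le> s" "t \<le> h" for s t
    using that by (auto intro: continuous_on_subset[OF cont] inj_on_subset[OF inj])
  have [measurable]: "\<gamma> ` {0..l} \<in> sets M" "\<gamma> ` {0..r} \<in> sets M" "\<gamma> ` {l<..<r} \<in> sets M"
    using \<open>0 \<le> l\<close> \<open>l \<le> r\<close> \<open>r \<le> h\<close> cont_on inj_on
    by (simp_all add: sets_image_atLeastAtMost[OF borel] sets_image_greaterThanLessThan[OF borel])
  have "\<gamma> ` {0..l} \<inter> \<gamma> ` {l<..<r} = \<gamma> ` ({0..l} \<inter> {l<..<r})"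
    using assms by (intro inj_on_image_Int[symmetric, OF inj]) auto
  also have "{0..l} \<inter> {l<..<r} = {}"
    by auto
  finally have "\<gamma> ` {0..l} \<inter> \<gamma> ` {l<..<r} = {}"
    by simp
  moreover have "emeasure M (\<gamma> ` {0..l}) = ennreal l"
    using arclen assms by (simp add: mu_arc_length_param_def)
  ultimately have "ennreal l + emeasure M (\<gamma> ` {l<..<r}) = emeasure M (\<gamma> ` {0..l} \<union> \<gamma> ` {l<..<r})"
    by (metis plus_emeasure \<open>\<gamma> ` {0..l} \<in> sets M\<close> \<open>\<gamma> ` {l<..<r} \<in> sets M\<close>)
  also have "\<dots> \<le> emeasure M (\<gamma> ` {0..r})"
    using \<open>0 \<le> l\<close> \<open>l \<le> r\<close> by (intro emeasure_mono Un_least image_mono) auto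
  also have "\<dots> = ennreal r"
    using arclen assms by (simp add: mu_arc_length_param_def)
  finally have "emeasure M (\<gamma> ` {l<..<r}) \<le> ennreal r - ennreal l"
    by (simp add: ennreal_le_minus_iff add.commute)
  then show ?thesis
    using \<open>0 \<le> l\<close> by (simp add: ennreal_minus)
qed

lemma emeasure_UN_image_greaterThanLessThan:
  fixes \<gamma> :: "real \<Rightarrow> 'a::metric_space"
  assumes borel: "sets M = sets borel"
    and cont: "continuous_on {a..b} \<gamma>" and inj: "inj_on \<gamma> {a..b}"
    and bounds: "\<And>i. i \<in> I \<Longrightarrow> a \<le> l i \<and> r i \<le> b"
    and disj: "disjoint_family_on (\<lambda>i. {l i<..<r i}) I" and "finite I"
  shows "emeasure M (\<Union>i\<in>I. \<gamma> ` {l i<..<r i}) = (\<Sum>i\<in>I. emeasure M (\<gamma> ` {l i<..<r i}))"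
proof (rule sum_emeasure[symmetric])
  show "(\<lambda>i. \<gamma> ` {l i<..<r i}) ` I \<subseteq> sets M"
    using bounds by (auto intro: sets_image_greaterThanLessThan_subinterval[OF borel cont inj])
  show "disjoint_family_on (\<lambda>i. \<gamma> ` {l i<..<r i}) I"
    unfolding disjoint_family_on_def
  proof (intro ballI impI)
    fix i j assume "i \<in> I" "j \<in> I" "i \<noteq> j"
    then have "\<gamma> ` {l i<..<r i} \<inter> \<gamma> ` {l j<..<r j} = \<gamma> ` ({l i<..<r i} \<inter> {l j<..<r j})"
      using bounds by (intro inj_on_image_Int[symmetric, OF inj]) force+
    also have "\<dots> = {}"
      using disj \<open>i \<in> I\<close> \<open>j \<in> I\<close> \<open>i \<noteq> j\<close> by (simp add: disjoint_family_on_def)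
    finally show "\<gamma> ` {l i<..<r i} \<inter> \<gamma> ` {l j<..<r j} = {}" .
  qed
qed fact

lemma abs_continuous_on_if_increments_bounded_by_image_measure:
  fixes \<gamma> :: "real \<Rightarrow> 'a::metric_space" and g :: "real \<Rightarrow> real"
  assumes borel: "sets M = sets borel" and sets_N: "sets N = sets M"
    and cont: "continuous_on {a..b} \<gamma>" and inj: "inj_on \<gamma> {a..b}"
    and length: "\<And>l r. a \<le> l \<Longrightarrow> l \<le> r \<Longrightarrow> r \<le> b \<Longrightarrow>
      emeasure M (\<gamma> ` {l<..<r}) \<le> ennreal (r - l)"
    and increment: "\<And>l r. a \<le> l \<Longrightarrow> l \<le> r \<Longrightarrow> r \<le> b \<Longrightarrow>
      ennreal \<bar>g r - g l\<bar> \<le> emeasure N (\<gamma> ` {l<..<r})"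
    and abs_cont: "\<And>e. 0 < e \<Longrightarrow> \<exists>d>0. \<forall>A\<in>sets M. A \<subseteq> \<gamma> ` {a..b} \<longrightarrow>
      emeasure M A < ennreal d \<longrightarrow> emeasure N A < ennreal e"
  shows "abs_continuous_on a b g"
  unfolding abs_continuous_on_def
proof (intro allI impI)
  fix e :: real assume "0 < e"
  then obtain d where "0 < d" and small: "\<forall>A\<in>sets M. A \<subseteq> \<gamma> ` {a..b} \<longrightarrow>
      emeasure M A < ennreal d \<longrightarrow> emeasure N A < ennreal e"
    using abs_cont by blast
  show "\<exists>d>0. \<forall>(n::nat) l r. (\<forall>i<n. a \<le> l i \<and> l i \<le> r i \<and> r i \<le> b) \<longrightarrow>
      (\<forall>i<n. \<forall>j<n. i \<noteq> j \<longrightarrow> {l i<..<r i} \<inter> {l j<..<r j} = {}) \<longrightarrow>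
      (\<Sum>i<n. r i - l i) < d \<longrightarrow> (\<Sum>i<n. \<bar>g (r i) - g (l i)\<bar>) < e"
  proof (intro exI[of _ d] conjI allI impI \<open>0 < d\<close>)
    fix n :: nat and l r :: "nat \<Rightarrow> real"
    assume lr: "\<forall>i<n. a \<le> l i \<and> l i \<le> r i \<and> r i \<le> b"
      and disj: "\<forall>i<n. \<forall>j<n. i \<noteq> j \<longrightarrow> {l i<..<r i} \<inter> {l j<..<r j} = {}"
      and short: "(\<Sum>i<n. r i - l i) < d"
    define U where "U = (\<Union>i<n. \<gamma> ` {l i<..<r i})"
    have bounds: "a \<le> l i" "l i \<le> r i" "r i \<le> b" if "i \<in> {..<n}" for i
      using lr that by auto
    have disj': "disjoint_family_on (\<lambda>i. {l i<..<r i}) {..<n}"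
      using disj by (auto simp: disjoint_family_on_def)
    have "U \<in> sets M"
      unfolding U_def using bounds
      by (intro sets.finite_UN finite_lessThan ballI
          sets_image_greaterThanLessThan_subinterval[OF borel cont inj]) simp_all
    have "U \<subseteq> \<gamma> ` {a..b}"
      unfolding U_def using bounds by (intro UN_least image_mono) force
    have "emeasure M U = (\<Sum>i<n. emeasure M (\<gamma> ` {l i<..<r i}))"
      unfolding U_def using bounds disj'
      by (intro emeasure_UN_image_greaterThanLessThan[OF borel cont inj]) simp_all
    also have "\<dots> \<le> (\<Sum>i<n. ennreal (r i - l i))"
      using bounds by (intro sum_mono length) simp_all
    also have "\<dots> = ennreal (\<Sum>i<n. r i - l i)"
      using bounds by (intro sum_ennreal) simp
    also have "\<dots> < ennreal d"
      using short \<open>0 < d\<close> by (simp add: ennreal_lessI)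
    finally have "emeasure N U < ennreal e"
      using small \<open>U \<in> sets M\<close> \<open>U \<subseteq> \<gamma> ` {a..b}\<close> by simp
    have "ennreal (\<Sum>i<n. \<bar>g (r i) - g (l i)\<bar>) = (\<Sum>i<n. ennreal \<bar>g (r i) - g (l i)\<bar>)"
      by (simp add: sum_ennreal)
    also have "\<dots> \<le> (\<Sum>i<n. emeasure N (\<gamma> ` {l i<..<r i}))"
      using bounds by (intro sum_mono increment) simp_all
    also have "\<dots> = emeasure N U"
      unfolding U_def using bounds disj' sets_N borel
      by (intro emeasure_UN_image_greaterThanLessThan[symmetric, OF _ cont inj]) simp_all
    finally have "ennreal (\<Sum>i<n. \<bar>g (r i) - g (l i)\<bar>) < ennreal e"
      using \<open>emeasure N U < ennreal e\<close> by (rule le_less_trans)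
    then show "(\<Sum>i<n. \<bar>g (r i) - g (l i)\<bar>) < e"
      by (simp add: ennreal_less_iff)
  qed
qed

theorem theorem2p4:
  fixes M :: "'a::metric_space measure"
    and f :: "'a \<Rightarrow> real"
    and \<gamma> :: "real \<Rightarrow> 'a"
    and h :: real
    and \<rho> :: "'a \<Rightarrow> real"
  assumes borel_M: "sets M = sets borel"
    and nonatomic: "\<And>x. emeasure M {x} = 0"
    and path: "in_Gamma_mu M \<gamma> 0 h"
    and arclen: "mu_arc_length_param M \<gamma> h"
    and rho_meas: "\<rho> \<in> borel_measurable borel"
    and rho_nonneg: "\<And>x. 0 \<le> \<rho> x"
    and upper: "\<And>s t. 0 \<le> s \<Longrightarrow> s < t \<Longrightarrow> t \<le> h \<Longrightarrow>
        ennreal \<bar>f (\<gamma> s) - f (\<gamma> t)\<bar> \<le> (\<integral>\<^sup>+ x \<in> \<gamma> ` {s..t}. ennreal (\<rho> x) \<partial>M)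
        \<and> (\<integral>\<^sup>+ x \<in> \<gamma> ` {s..t}. ennreal (\<rho> x) \<partial>M) < \<infinity>"
  shows "abs_continuous_on 0 h (f \<circ> \<gamma>)"
proof -
  have "0 < h" and cont: "continuous_on {0..h} \<gamma>" and inj: "inj_on \<gamma> {0..h}"
    using path unfolding in_Gamma_mu_def by auto
  have [measurable]: "\<rho> \<in> borel_measurable M"
    using rho_meas borel_M by (simp cong: measurable_cong_sets)
  define N where "N = density M (\<lambda>x. ennreal (\<rho> x))"
  have sets_N: "sets N = sets M"
    by (simp add: N_def)
  have N_image: "emeasure N (\<gamma> ` {s..t}) = (\<integral>\<^sup>+ x \<in> \<gamma> ` {s..t}. ennreal (\<rho> x) \<partial>M)"
    if "0 \<le> s" "t \<le> h" for s t
    using that cont borel_M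
    by (simp add: N_def emeasure_density sets_image_atLeastAtMost continuous_on_subset)
  have nonatomic_N: "emeasure N {x} = 0" for x
    using nonatomic borel_M
    by (simp add: N_def emeasure_density)
  show ?thesis
  proof (rule abs_continuous_on_if_increments_bounded_by_image_measure[OF borel_M sets_N cont inj])
    show "emeasure M (\<gamma> ` {l<..<r}) \<le> ennreal (r - l)" if "0 \<le> l" "l \<le> r" "r \<le> h" for l r
      using emeasure_image_greaterThanLessThan_le_arc_length[OF borel_M arclen cont inj that] .
    show "ennreal \<bar>(f \<circ> \<gamma>) r - (f \<circ> \<gamma>) l\<bar> \<le> emeasure N (\<gamma> ` {l<..<r})"
      if "0 \<le> l" "l \<le> r" "r \<le> h" for l r
    proof (cases "l = r")
      case False
      then have "ennreal \<bar>(f \<circ> \<gamma>) r - (f \<circ> \<gamma>) l\<bar> \<le> emeasure N (\<gamma> ` {l..r})"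
        using upper[of l r] N_image[of l r] that by (simp add: abs_minus_commute)
      also have "\<dots> = emeasure N (\<gamma> ` {l<..<r})"
        using that borel_M sets_N
        by (intro emeasure_image_atLeastAtMost_nonatomic nonatomic_N continuous_on_subset[OF cont]
            inj_on_subset[OF inj]) auto
      finally show ?thesis .
    qed simp
    show "\<exists>d>0. \<forall>A\<in>sets M. A \<subseteq> \<gamma> ` {0..h} \<longrightarrow>
        emeasure M A < ennreal d \<longrightarrow> emeasure N A < ennreal e" if "0 < e" for e
      unfolding N_def using that upper[of 0 h] N_image[of 0 h] \<open>0 < h\<close> cont borel_M
      by (intro emeasure_density_absolutely_continuous) (auto simp: N_def sets_image_atLeastAtMost)
  qed
qed

end
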